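(* Let $(X,d)$ be a compact metric space and $f_{1,\infty}$ a commutative $m$-periodic sequence of continuous surjective self-maps of $X$. Then $(X,f_{1,\infty})$ is weakly mixing if and only if $(X,f_{1,\infty}^{[k]})$ is weakly mixing for every $k\ge1$.
   Context: Commutative: $f_i\circ f_j=f_j\circ f_i$ for all $i,j$. $m$-periodic: $f_{n+m}=f_n$ for all $n\ge1$. Write $f_n^i=f_{n+i-1}\circ\cdots\circ f_n$, $f_1^n=f_n\circ\cdots\circ f_1$, and $f_{1,\infty}^{[k]}=\{f_{k(n-1)+1}^k\}_{n=1}^\infty$ (whose $n$-fold composition is $f_1^{kn}$). A non-autonomous system $(Y,g_{1,\infty})$ is weakly mixing if for all non-empty open $U_1,U_2,V_1,V_2$ there is $n$ with $g_1^n(U_i)\cap V_i\ne\emptyset$, $i=1,2$. *)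

theory Defs
  imports "HOL-Analysis.Analysis"
begin

text \<open>A non-autonomous system is a sequence of maps indexed from 1: f 1, f 2, ...
  (the value f 0 is irrelevant).\<close>

fun fcomp_from :: "(nat \<Rightarrow> 'a \<Rightarrow> 'a) \<Rightarrow> nat \<Rightarrow> nat \<Rightarrow> 'a \<Rightarrow> 'a" where
  "fcomp_from f i 0 = id"
| "fcomp_from f i (Suc n) = f (i + n) \<circ> fcomp_from f i n"

definition block_sys :: "nat \<Rightarrow> (nat \<Rightarrow> 'a \<Rightarrow> 'a) \<Rightarrow> nat \<Rightarrow> 'a \<Rightarrow> 'a" where
  "block_sys k f n = fcomp_from f (k * (n - 1) + 1) k"

definition commutative_sys :: "'a set \<Rightarrow> (nat \<Rightarrow> 'a \<Rightarrow> 'a) \<Rightarrow> bool" where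
  "commutative_sys X f \<longleftrightarrow> (\<forall>i\<ge>1. \<forall>j\<ge>1. \<forall>x\<in>X. f i (f j x) = f j (f i x))"

definition periodic_sys :: "nat \<Rightarrow> (nat \<Rightarrow> 'a \<Rightarrow> 'a) \<Rightarrow> bool" where
  "periodic_sys m f \<longleftrightarrow> (\<forall>n\<ge>1. f (n + m) = f n)"

definition weakly_mixing_sys :: "'a::topological_space set \<Rightarrow> (nat \<Rightarrow> 'a \<Rightarrow> 'a) \<Rightarrow> bool" where
  "weakly_mixing_sys X g \<longleftrightarrow>
     (\<forall>U1 U2 V1 V2. openin (top_of_set X) U1 \<and> openin (top_of_set X) U2 \<and>
        openin (top_of_set X) V1 \<and> openin (top_of_set X) V2 \<and>
        U1 \<noteq> {} \<and> U2 \<noteq> {} \<and> V1 \<noteq> {} \<and> V2 \<noteq> {} \<longrightarrow>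
        (\<exists>n\<ge>1. fcomp_from g 1 n ` U1 \<inter> V1 \<noteq> {} \<and> fcomp_from g 1 n ` U2 \<inter> V2 \<noteq> {}))"

end

theory Submission
  imports Defs
begin

text \<open>If \<open>f\<^sub>1\<^sup>n\<close> hits both pairs \<open>(U\<^sub>1, U\<^sub>2)\<close> and \<open>(V\<^sub>1, V\<^sub>2)\<close>, then, as the maps commute,
  every hitting time of the nonempty open pair
  \<open>(U\<^sub>1 \<inter> (f\<^sub>1\<^sup>n)\<inverse> U\<^sub>2, V\<^sub>1 \<inter> (f\<^sub>1\<^sup>n)\<inverse> V\<^sub>2)\<close> is a common hitting time of
  \<open>(U\<^sub>1, V\<^sub>1)\<close> and \<open>(U\<^sub>2, V\<^sub>2)\<close>. Iterating, weak mixing makes any finite family of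
  nonempty open pairs hit at a common time \<open>n\<close>. Apply this to all pairs
  \<open>(U, (f\<^sub>r\<^sub>+\<^sub>1\<^sup>j)\<inverse> V)\<close> with \<open>r < m\<close>, \<open>j < k\<close>, and choose \<open>j\<close> with \<open>k\<close> dividing
  \<open>n + j\<close>: by periodicity \<open>f\<^sub>n\<^sub>+\<^sub>1\<^sup>j = f\<^sub>r\<^sub>+\<^sub>1\<^sup>j\<close> for \<open>r = n mod m\<close>, so the multiple
  \<open>n + j\<close> of \<open>k\<close> is a hitting time of \<open>(U, V)\<close>.\<close>

lemma fcomp_from_add: "fcomp_from f i (a + b) = fcomp_from f (i + a) b \<circ> fcomp_from f i a"
  by (induction b) (auto simp: add.assoc)

lemma fcomp_from_cong:
  "(\<And>t. t < j \<Longrightarrow> f (a + t) = f (b + t)) \<Longrightarrow> fcomp_from f a j = fcomp_from f b j"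
  by (induction j) auto

lemma fcomp_from_block_sys: "fcomp_from (block_sys k f) 1 n = fcomp_from f 1 (k * n)"
proof (induction n)
  case (Suc n)
  have "fcomp_from f 1 (k * Suc n) = fcomp_from f (1 + k * n) k \<circ> fcomp_from f 1 (k * n)"
    using fcomp_from_add[of f 1 "k * n" k] by (simp add: algebra_simps)
  then show ?case using Suc by (simp add: block_sys_def algebra_simps)
qed simp

lemma periodic_sys_add_mult:
  assumes "periodic_sys m f" "i \<ge> 1" shows "f (i + m * q) = f i"
proof (induction q)
  case (Suc q)
  have "f (i + m * Suc q) = f ((i + m * q) + m)" by (simp add: algebra_simps)
  also have "\<dots> = f (i + m * q)" using assms unfolding periodic_sys_def by auto
  finally show ?case using Suc by simp
qed simp

lemma fcomp_from_periodic:
  assumes "periodic_sys m f"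
  shows "fcomp_from f (n + 1) j = fcomp_from f (n mod m + 1) j"
proof (rule fcomp_from_cong)
  fix t
  have "n + 1 + t = (n mod m + 1 + t) + m * (n div m)" by simp
  then show "f (n + 1 + t) = f (n mod m + 1 + t)"
    using periodic_sys_add_mult[OF assms, of "n mod m + 1 + t" "n div m"] by simp
qed

lemma exists_dvd_add_less:
  fixes k n :: nat assumes "0 < k" shows "\<exists>j<k. k dvd n + j"
proof (cases "k dvd n")
  case True
  then show ?thesis using assms by auto
next
  case False
  have "n + (k - n mod k) = k * (n div k) + k"
    using mod_less_divisor[OF assms, of n] div_mult_mod_eq[of n k] mult.commute[of k "n div k"]
    by linarith
  then have "k dvd n + (k - n mod k)" by simp
  moreover have "k - n mod k < k" using False assms by (simp add: dvd_eq_mod_eq_0)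
  ultimately show ?thesis by blast
qed

definition hitting_times :: "(nat \<Rightarrow> 'a \<Rightarrow> 'a) \<Rightarrow> 'a set \<Rightarrow> 'a set \<Rightarrow> nat set" where
  "hitting_times f U V = {n. n \<ge> 1 \<and> fcomp_from f 1 n ` U \<inter> V \<noteq> {}}"

context
  fixes X :: "'a::topological_space set" and f :: "nat \<Rightarrow> 'a \<Rightarrow> 'a"
  assumes continuous: "\<And>n. n \<ge> 1 \<Longrightarrow> continuous_on X (f n)"
    and surjective: "\<And>n. n \<ge> 1 \<Longrightarrow> f n ` X = X"
    and commuting: "commutative_sys X f"
begin

lemma fcomp_from_image: "a \<ge> 1 \<Longrightarrow> fcomp_from f a n ` X = X"
proof (induction n)
  case (Suc n)
  have "fcomp_from f a (Suc n) ` X = f (a + n) ` (fcomp_from f a n ` X)"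
    by (simp add: image_comp)
  then show ?case using Suc surjective[of "a + n"] by simp
qed simp

lemma fcomp_from_in: "a \<ge> 1 \<Longrightarrow> x \<in> X \<Longrightarrow> fcomp_from f a n x \<in> X"
  using fcomp_from_image by blast

lemma continuous_on_fcomp_from: "a \<ge> 1 \<Longrightarrow> continuous_on X (fcomp_from f a n)"
proof (induction n)
  case (Suc n)
  then show ?case
    using continuous_on_compose[OF Suc.IH[OF Suc.prems], of "f (a + n)"]
      continuous[of "a + n"] fcomp_from_image[OF Suc.prems, of n]
    by simp
qed (simp add: continuous_on_id)

lemma map_fcomp_from_commute:
  "x \<in> X \<Longrightarrow> i \<ge> 1 \<Longrightarrow> a \<ge> 1 \<Longrightarrow> f i (fcomp_from f a n x) = fcomp_from f a n (f i x)"
proof (induction n)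
  case (Suc n)
  have "f i (f (a + n) (fcomp_from f a n x)) = f (a + n) (f i (fcomp_from f a n x))"
    using commuting Suc.prems fcomp_from_in unfolding commutative_sys_def by auto
  then show ?case using Suc by simp
qed simp

lemma fcomp_from_commute:
  "x \<in> X \<Longrightarrow> a \<ge> 1 \<Longrightarrow> b \<ge> 1 \<Longrightarrow>
   fcomp_from f a n (fcomp_from f b p x) = fcomp_from f b p (fcomp_from f a n x)"
proof (induction n)
  case (Suc n)
  have "f (a + n) (fcomp_from f b p (fcomp_from f a n x))
      = fcomp_from f b p (f (a + n) (fcomp_from f a n x))"
    using map_fcomp_from_commute[of "fcomp_from f a n x" "a + n" b p] fcomp_from_in Suc.prems by auto
  then show ?case using Suc by simp
qed simp

lemma openin_fcomp_from_preimage: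
  assumes "a \<ge> 1" "openin (top_of_set X) V"
  shows "openin (top_of_set X) {x\<in>X. fcomp_from f a j x \<in> V}"
proof -
  have "fcomp_from f a j \<in> X \<rightarrow> X" using fcomp_from_in assms(1) by blast
  then have "openin (top_of_set X) (X \<inter> fcomp_from f a j -` V)"
    using continuous_on_open_gen continuous_on_fcomp_from[OF assms(1)] assms(2) by blast
  moreover have "X \<inter> fcomp_from f a j -` V = {x\<in>X. fcomp_from f a j x \<in> V}" by auto
  ultimately show ?thesis by simp
qed

lemma fcomp_from_preimage_nonempty:
  assumes "a \<ge> 1" "V \<subseteq> X" "V \<noteq> {}"
  shows "{x\<in>X. fcomp_from f a j x \<in> V} \<noteq> {}"
proof -
  obtain y where "y \<in> V" using assms(3) by blast
  then have "y \<in> fcomp_from f a j ` X" using assms(2) fcomp_from_image[OF assms(1), of j] by auto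
  then obtain x where "x \<in> X" "fcomp_from f a j x = y" by (elim imageE) simp
  then show ?thesis using \<open>y \<in> V\<close> by blast
qed

lemma hitting_times_shrink_pair:
  assumes wm: "weakly_mixing_sys X f"
    and opens: "openin (top_of_set X) U1" "openin (top_of_set X) V1"
      "openin (top_of_set X) U2" "openin (top_of_set X) V2"
    and nonempty: "U1 \<noteq> {}" "V1 \<noteq> {}" "U2 \<noteq> {}" "V2 \<noteq> {}"
  obtains U V where "openin (top_of_set X) U" "openin (top_of_set X) V" "U \<noteq> {}" "V \<noteq> {}"
    "hitting_times f U V \<subseteq> hitting_times f U1 V1 \<inter> hitting_times f U2 V2"
proof -
  let ?F = "fcomp_from f 1"
  obtain n where n: "n \<ge> 1" "?F n ` U1 \<inter> U2 \<noteq> {}" "?F n ` V1 \<inter> V2 \<noteq> {}"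
    using wm[unfolded weakly_mixing_sys_def, rule_format, of U1 V1 U2 V2] opens nonempty by blast
  have "U1 \<subseteq> X" "V1 \<subseteq> X" using opens by (auto dest: openin_imp_subset)
  define U where "U = U1 \<inter> {x\<in>X. ?F n x \<in> U2}"
  define V where "V = V1 \<inter> {x\<in>X. ?F n x \<in> V2}"
  have "openin (top_of_set X) U" "openin (top_of_set X) V"
    unfolding U_def V_def
    using opens openin_fcomp_from_preimage[of 1 U2 n] openin_fcomp_from_preimage[of 1 V2 n]
    by (auto intro: openin_Int)
  moreover have "U \<noteq> {}" "V \<noteq> {}"
    unfolding U_def V_def using n(2,3) \<open>U1 \<subseteq> X\<close> \<open>V1 \<subseteq> X\<close> by blast+
  moreover have "hitting_times f U V \<subseteq> hitting_times f U1 V1 \<inter> hitting_times f U2 V2"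
  proof
    fix k assume "k \<in> hitting_times f U V"
    then obtain x where x: "k \<ge> 1" "x \<in> U" "?F k x \<in> V" unfolding hitting_times_def by auto
    have "x \<in> X" using x(2) unfolding U_def by blast
    then have swap: "?F k (?F n x) = ?F n (?F k x)" using fcomp_from_commute[of x 1 1 k n] by simp
    have "?F k (?F n x) \<in> V2" unfolding swap using x(3) V_def by auto
    moreover have "x \<in> U1" "?F n x \<in> U2" "?F k x \<in> V1" using x(2,3) U_def V_def by auto
    ultimately have "?F k x \<in> ?F k ` U1 \<inter> V1" "?F k (?F n x) \<in> ?F k ` U2 \<inter> V2"
      by blast+
    then show "k \<in> hitting_times f U1 V1 \<inter> hitting_times f U2 V2"
      using x(1) unfolding hitting_times_def by blast
  qed
  ultimately show ?thesis using that by blast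
qed

lemma hitting_times_shrink_finite_family:
  assumes wm: "weakly_mixing_sys X f" and "finite I" "I \<noteq> {}"
    and opens: "\<And>i. i \<in> I \<Longrightarrow> openin (top_of_set X) (U i) \<and> openin (top_of_set X) (V i)"
    and nonempty: "\<And>i. i \<in> I \<Longrightarrow> U i \<noteq> {} \<and> V i \<noteq> {}"
  shows "\<exists>U' V'. openin (top_of_set X) U' \<and> openin (top_of_set X) V' \<and> U' \<noteq> {} \<and> V' \<noteq> {} \<and>
    hitting_times f U' V' \<subseteq> (\<Inter>i\<in>I. hitting_times f (U i) (V i))"
  using assms(2,3) opens nonempty
proof (induction I rule: finite_ne_induct)
  case (singleton i)
  then show ?case by (intro exI[of _ "U i"] exI[of _ "V i"]) simp
next
  case (insert i I)
  have "\<exists>U' V'. openin (top_of_set X) U' \<and> openin (top_of_set X) V' \<and> U' \<noteq> {} \<and> V' \<noteq> {} \<and>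
    hitting_times f U' V' \<subseteq> (\<Inter>i\<in>I. hitting_times f (U i) (V i))"
    by (rule insert.IH) (simp_all add: insert.prems)
  then obtain U' V' where "openin (top_of_set X) U'" "openin (top_of_set X) V'" "U' \<noteq> {}" "V' \<noteq> {}"
    and sub: "hitting_times f U' V' \<subseteq> (\<Inter>i\<in>I. hitting_times f (U i) (V i))"
    by blast
  moreover obtain U'' V'' where "openin (top_of_set X) U''" "openin (top_of_set X) V''"
    "U'' \<noteq> {}" "V'' \<noteq> {}"
    and "hitting_times f U'' V'' \<subseteq> hitting_times f U' V' \<inter> hitting_times f (U i) (V i)"
    using hitting_times_shrink_pair[OF wm, of U' V' "U i" "V i"] insert.prems[of i] calculation(1-4)
    by auto
  ultimately show ?case by blast
qed

lemma weakly_mixing_finite_family: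
  assumes wm: "weakly_mixing_sys X f" and "finite I" "I \<noteq> {}"
    and "\<And>i. i \<in> I \<Longrightarrow> openin (top_of_set X) (U i) \<and> openin (top_of_set X) (V i)"
    and "\<And>i. i \<in> I \<Longrightarrow> U i \<noteq> {} \<and> V i \<noteq> {}"
  shows "\<exists>n\<ge>1. \<forall>i\<in>I. fcomp_from f 1 n ` U i \<inter> V i \<noteq> {}"
proof -
  obtain U' V' where "openin (top_of_set X) U'" "openin (top_of_set X) V'" "U' \<noteq> {}" "V' \<noteq> {}"
    and sub: "hitting_times f U' V' \<subseteq> (\<Inter>i\<in>I. hitting_times f (U i) (V i))"
    using hitting_times_shrink_finite_family[where I=I and U=U and V=V, OF assms] by blast
  then have "\<exists>n\<ge>1. fcomp_from f 1 n ` U' \<inter> V' \<noteq> {}"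
    using wm[unfolded weakly_mixing_sys_def, rule_format, of U' U' V' V'] by blast
  then obtain n where "n \<in> hitting_times f U' V'" unfolding hitting_times_def by blast
  with sub have "\<forall>i\<in>I. n \<in> hitting_times f (U i) (V i)" by blast
  then show ?thesis using \<open>n \<in> hitting_times f U' V'\<close> by (auto simp: hitting_times_def)
qed

lemma weakly_mixing_finite_family_mult:
  assumes wm: "weakly_mixing_sys X f" and per: "periodic_sys m f" "m \<ge> 1" and "k \<ge> 1"
    and fin: "finite I" "I \<noteq> {}"
    and opens: "\<And>i. i \<in> I \<Longrightarrow> openin (top_of_set X) (U i) \<and> openin (top_of_set X) (V i)"
    and nonempty: "\<And>i. i \<in> I \<Longrightarrow> U i \<noteq> {} \<and> V i \<noteq> {}"
  shows "\<exists>N\<ge>1. \<forall>i\<in>I. fcomp_from f 1 (k * N) ` U i \<inter> V i \<noteq> {}"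
proof -
  define pre where "pre r j i = {x\<in>X. fcomp_from f (r + 1) j x \<in> V i}" for r j i
  let ?J = "I \<times> {..<m} \<times> {..<k}"
  have "finite ?J" "?J \<noteq> {}" using fin per(2) \<open>k \<ge> 1\<close> by (auto simp: lessThan_empty_iff)
  moreover have "openin (top_of_set X) (U i) \<and> openin (top_of_set X) (pre r j i)"
    and "U i \<noteq> {} \<and> pre r j i \<noteq> {}" if "(i, r, j) \<in> ?J" for i r j
    using that opens[of i] nonempty[of i] openin_imp_subset
      openin_fcomp_from_preimage[of "r + 1" "V i" j]
      fcomp_from_preimage_nonempty[of "r + 1" "V i" j]
    unfolding pre_def by auto
  ultimately obtain n where "n \<ge> 1"
    and "\<forall>(i, r, j)\<in>?J. fcomp_from f 1 n ` U i \<inter> pre r j i \<noteq> {}"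
    using weakly_mixing_finite_family[OF wm, of ?J "\<lambda>(i, _, _). U i" "\<lambda>(i, r, j). pre r j i"]
    by (auto simp: split_beta)
  then have hit: "\<And>i r j. i \<in> I \<Longrightarrow> r < m \<Longrightarrow> j < k \<Longrightarrow> fcomp_from f 1 n ` U i \<inter> pre r j i \<noteq> {}"
    by auto
  obtain j where "j < k" "k dvd n + j" using exists_dvd_add_less[of k n] \<open>k \<ge> 1\<close> by auto
  then obtain N where N: "n + j = k * N" by blast
  have "\<forall>i\<in>I. fcomp_from f 1 (n + j) ` U i \<inter> V i \<noteq> {}"
  proof
    fix i assume "i \<in> I"
    moreover have "n mod m < m" using per(2) by simp
    ultimately obtain x where "x \<in> U i" "fcomp_from f 1 n x \<in> pre (n mod m) j i"
      using hit[of i "n mod m" j] \<open>j < k\<close> by blast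
    moreover have "fcomp_from f 1 (n + j) x = fcomp_from f (n mod m + 1) j (fcomp_from f 1 n x)"
      using fcomp_from_add[of f 1 n j] fcomp_from_periodic[OF per(1), of n j] by simp
    ultimately show "fcomp_from f 1 (n + j) ` U i \<inter> V i \<noteq> {}"
      unfolding pre_def by auto
  qed
  moreover have "N \<ge> 1" using N \<open>n \<ge> 1\<close> by (cases N) auto
  ultimately show ?thesis unfolding N by blast
qed

lemma weakly_mixing_block_sys:
  assumes "weakly_mixing_sys X f" "periodic_sys m f" "m \<ge> 1" "k \<ge> 1"
  shows "weakly_mixing_sys X (block_sys k f)"
  unfolding weakly_mixing_sys_def fcomp_from_block_sys
proof (intro allI impI)
  fix U1 U2 V1 V2 :: "'a set"
  define U where "U b = (if b then U1 else U2)" for b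
  define V where "V b = (if b then V1 else V2)" for b
  assume "openin (top_of_set X) U1 \<and> openin (top_of_set X) U2 \<and>
    openin (top_of_set X) V1 \<and> openin (top_of_set X) V2 \<and>
    U1 \<noteq> {} \<and> U2 \<noteq> {} \<and> V1 \<noteq> {} \<and> V2 \<noteq> {}"
  then have "openin (top_of_set X) (U b) \<and> openin (top_of_set X) (V b)"
    and "U b \<noteq> {} \<and> V b \<noteq> {}" for b
    unfolding U_def V_def by simp_all
  then obtain N where "N \<ge> 1" and hit: "\<forall>b\<in>UNIV. fcomp_from f 1 (k * N) ` U b \<inter> V b \<noteq> {}"
    using weakly_mixing_finite_family_mult[OF assms, of UNIV U V] by auto
  then show "\<exists>n\<ge>1. fcomp_from f 1 (k * n) ` U1 \<inter> V1 \<noteq> {} \<and> fcomp_from f 1 (k * n) ` U2 \<inter> V2 \<noteq> {}"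
    using hit[rule_format, of True] hit[rule_format, of False] unfolding U_def V_def by auto
qed

end

theorem mainTheorem12:
  fixes X :: "'a::metric_space set" and f :: "nat \<Rightarrow> 'a \<Rightarrow> 'a" and m :: nat
  assumes "compact X"
    and "\<And>n. n \<ge> 1 \<Longrightarrow> continuous_on X (f n)"
    and "\<And>n. n \<ge> 1 \<Longrightarrow> f n ` X = X"
    and "commutative_sys X f"
    and "m \<ge> 1"
    and "periodic_sys m f"
  shows "weakly_mixing_sys X f \<longleftrightarrow> (\<forall>k\<ge>1. weakly_mixing_sys X (block_sys k f))"
proof
  assume "weakly_mixing_sys X f"
  then show "\<forall>k\<ge>1. weakly_mixing_sys X (block_sys k f)"
    using weakly_mixing_block_sys[OF assms(2-4)] assms(5,6) by blast
next
  assume "\<forall>k\<ge>1. weakly_mixing_sys X (block_sys k f)"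
  then have "weakly_mixing_sys X (block_sys 1 f)" by simp
  then show "weakly_mixing_sys X f" unfolding weakly_mixing_sys_def fcomp_from_block_sys by simp
qed

end
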